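(* Let $n \geq 3$. Then $$\max_{G} T_{\min}(G) = 2n-4 \qquad\text{and}\qquad \max_{G} T_{\max}(G) = \left\lfloor n^2/2 \right\rfloor - 1,$$ where both maxima range over all connected, undirected (simple) graphs $G$ on $n$ vertices.
   Context: Let $G=(V,E)$ be a connected undirected graph with $|V| = n$. An ordering is a bijection $\pi: V \to \{1,\dots,n\}$. For vertices $u,v$, let $d_G(u,v)$ denote the length (number of edges) of a shortest path from $u$ to $v$ in $G$. The communication time of ordering $\pi$ on $G$ is $$T(G,\pi) = \sum_{i=1}^{n-1} d_G\big(\pi^{-1}(i), \pi^{-1}(i+1)\big).$$ Define $T_{\min}(G) = \min_{\pi} T(G,\pi)$ and $T_{\max}(G) = \max_{\pi} T(G,\pi)$, the minimum and maximum over all orderings $\pi$. *)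

theory Defs
  imports Main
begin

definition simple_graph :: "nat \<Rightarrow> (nat \<Rightarrow> nat \<Rightarrow> bool) \<Rightarrow> bool" where
  "simple_graph n E \<longleftrightarrow> (\<forall>u v. E u v \<longrightarrow> E v u) \<and> (\<forall>u. \<not> E u u)
     \<and> (\<forall>u v. E u v \<longrightarrow> u < n \<and> v < n)"

definition is_walk :: "(nat \<Rightarrow> nat \<Rightarrow> bool) \<Rightarrow> nat list \<Rightarrow> nat \<Rightarrow> nat \<Rightarrow> bool" where
  "is_walk E xs u v \<longleftrightarrow> xs \<noteq> [] \<and> hd xs = u \<and> last xs = v
     \<and> (\<forall>i. Suc i < length xs \<longrightarrow> E (xs ! i) (xs ! Suc i))"

definition connected_graph :: "nat \<Rightarrow> (nat \<Rightarrow> nat \<Rightarrow> bool) \<Rightarrow> bool" where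
  "connected_graph n E \<longleftrightarrow> (\<forall>u<n. \<forall>v<n. \<exists>xs. is_walk E xs u v)"

definition gdist :: "(nat \<Rightarrow> nat \<Rightarrow> bool) \<Rightarrow> nat \<Rightarrow> nat \<Rightarrow> nat" where
  "gdist E u v = (LEAST k. \<exists>xs. is_walk E xs u v \<and> length xs = Suc k)"

definition orderings :: "nat \<Rightarrow> (nat \<Rightarrow> nat) set" where
  "orderings n = {\<pi>. bij_betw \<pi> {0..<n} {1..n}}"

definition comm_time :: "nat \<Rightarrow> (nat \<Rightarrow> nat \<Rightarrow> bool) \<Rightarrow> (nat \<Rightarrow> nat) \<Rightarrow> nat" where
  "comm_time n E \<pi> = (\<Sum>i=1..n-1. gdist E (inv_into {0..<n} \<pi> i) (inv_into {0..<n} \<pi> (i+1)))"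

definition T_min :: "nat \<Rightarrow> (nat \<Rightarrow> nat \<Rightarrow> bool) \<Rightarrow> nat" where
  "T_min n E = Min (comm_time n E ` orderings n)"

definition T_max :: "nat \<Rightarrow> (nat \<Rightarrow> nat \<Rightarrow> bool) \<Rightarrow> nat" where
  "T_max n E = Max (comm_time n E ` orderings n)"

definition conn_graphs :: "nat \<Rightarrow> (nat \<Rightarrow> nat \<Rightarrow> bool) set" where
  "conn_graphs n = {E. simple_graph n E \<and> connected_graph n E}"

end

theory Submission
  imports Defs "HOL-Combinatorics.Multiset_Permutations"
begin

text \<open>
  Upper bound for T_min: listing the vertices along a depth-first traversal of a
  breadth-first spanning tree gives a closed tour of cost at most 2(n - 1). If every step of the
  tour, read as a path, has length 1 the path costs n - 1; otherwise cutting the tour at a step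
  of length at least 2 leaves a path of cost at most 2n - 4. The star attains the bound, since
  every step between two leaves costs 2.

  Upper bound for T_max: let r be a median, i.e. a vertex minimising the total distance s(r) to
  all vertices. Bounding every step through r gives T(\<pi>) < 2 s(r). Group the other vertices by
  the first step of a shortest path from r: the minimality of s(r) makes each group of size
  at most n/2, and since a group contains the predecessors of its vertices on shortest paths,
  the distances from r within a group of size b sum to at most 1 + 2 + ... + b. Hence
  4 s(r) \<le> n^2. On the path 0 - 1 - ... - (n - 1) the ordering that alternates between the
  two halves attains \<lfloor>n^2/2\<rfloor> - 1.
\<close>

lemma is_walk_singleton: "is_walk E [u] u u"
  by (simp add: is_walk_def)

lemma is_walk_edge: "E u v \<Longrightarrow> is_walk E [u, v] u v"
  by (auto simp: is_walk_def nth_Cons split: nat.splits)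

lemma is_walk_append:
  assumes "is_walk E xs u v" "is_walk E ys v w"
  shows "is_walk E (xs @ tl ys) u w"
proof -
  from assms obtain ys' where ys: "ys = v # ys'"
    by (cases ys) (auto simp: is_walk_def)
  have xs: "xs \<noteq> []" "hd xs = u" "last xs = v"
    and exs: "\<And>i. Suc i < length xs \<Longrightarrow> E (xs ! i) (xs ! Suc i)"
    and eys: "\<And>i. Suc i < length ys \<Longrightarrow> E (ys ! i) (ys ! Suc i)"
    using assms by (auto simp: is_walk_def)
  have "E ((xs @ ys') ! i) ((xs @ ys') ! Suc i)" if i: "Suc i < length (xs @ ys')" for i
  proof (cases "Suc i < length xs")
    case True
    then show ?thesis using exs by (simp add: nth_append)
  next
    case False
    then have "(xs @ ys') ! i = ys ! (i + 1 - length xs)"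
      and "(xs @ ys') ! Suc i = ys ! Suc (i + 1 - length xs)"
      using xs ys by (auto simp: nth_append last_conv_nth Suc_diff_le not_less_eq
          intro: arg_cong[where f = "(!) xs"])
    moreover have "Suc (i + 1 - length xs) < length ys" using i False ys by auto
    ultimately show ?thesis using eys by presburger
  qed
  moreover have "last (xs @ ys') = w"
    using assms(2) ys xs by (cases ys') (auto simp: is_walk_def)
  ultimately show ?thesis using xs ys by (auto simp: is_walk_def)
qed

lemma is_walk_rev:
  assumes "\<forall>u v. E u v \<longrightarrow> E v u" "is_walk E xs u v"
  shows "is_walk E (rev xs) v u"
proof -
  have "E (rev xs ! i) (rev xs ! Suc i)" if "Suc i < length xs" for i
  proof -
    have "E (xs ! (length xs - Suc (Suc i))) (xs ! Suc (length xs - Suc (Suc i)))"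
      using assms(2) that unfolding is_walk_def
      by (metis Suc_diff_Suc diff_less zero_less_Suc less_trans_Suc Suc_lessD)
    moreover have "Suc (length xs - Suc (Suc i)) = length xs - Suc i" using that by simp
    ultimately show ?thesis using assms(1) that by (simp add: rev_nth)
  qed
  then show ?thesis using assms(2) by (auto simp: is_walk_def hd_rev last_rev)
qed

lemma is_walk_take:
  assumes "is_walk E xs u v" "0 < k" "k \<le> length xs"
  shows "is_walk E (take k xs) u (xs ! (k - 1))"
  using assms by (auto simp: is_walk_def last_conv_nth min_def)

lemma gdist_less_length:
  assumes "is_walk E xs u v"
  shows "gdist E u v < length xs"
proof -
  have "xs \<noteq> []" using assms by (simp add: is_walk_def)
  then have "gdist E u v \<le> length xs - 1"
    unfolding gdist_def using assms by (intro Least_le) auto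
  then show ?thesis using \<open>xs \<noteq> []\<close> by (cases xs) auto
qed

lemma shortest_walk_exists:
  assumes "is_walk E ys u v"
  shows "\<exists>xs. is_walk E xs u v \<and> length xs = Suc (gdist E u v)"
proof -
  have "ys \<noteq> []" using assms by (simp add: is_walk_def)
  then have "\<exists>k xs. is_walk E xs u v \<and> length xs = Suc k"
    using assms by (intro exI[of _ "length ys - 1"] exI[of _ ys]) simp
  then show ?thesis unfolding gdist_def by (rule LeastI_ex)
qed

lemma interval_subset_image_if_downward_closed:
  fixes f :: "'a \<Rightarrow> nat"
  assumes closed: "\<forall>v\<in>B. 2 \<le> f v \<longrightarrow> (\<exists>w\<in>B. f w + 1 = f v)"
    and x: "x \<in> B"
  shows "{1..f x} \<subseteq> f ` B"
proof -
  have chain: "f x - j \<in> f ` B" if "j < f x" for j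
    using that
  proof (induction j)
    case 0
    then show ?case using x by simp
  next
    case (Suc j)
    then obtain v where v: "v \<in> B" "f v = f x - j" by auto
    with Suc.prems closed obtain w where "w \<in> B" "f w + 1 = f v" by auto
    then have "f w = f x - Suc j" using v by simp
    with \<open>w \<in> B\<close> show ?case by (metis image_eqI)
  qed
  show ?thesis
  proof
    fix t assume "t \<in> {1..f x}"
    then have "t = f x - (f x - t)" "f x - t < f x" by auto
    then show "t \<in> f ` B" using chain by metis
  qed
qed

lemma sum_le_triangular_if_downward_closed:
  fixes f :: "'a \<Rightarrow> nat"
  assumes "finite B" "\<forall>v\<in>B. 2 \<le> f v \<longrightarrow> (\<exists>w\<in>B. f w + 1 = f v)"
  shows "2 * sum f B \<le> card B * (card B + 1)"
  using assms
proof (induction "card B" arbitrary: B)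
  case 0
  then show ?case by simp
next
  case (Suc k)
  obtain x where x: "x \<in> B" "\<forall>v\<in>B. f v \<le> f x"
    using Suc.hyps(2) Suc.prems(1) Max_in[of "f ` B"] Max_ge[of "f ` B"] by fastforce
  define B' where "B' = B - {x}"
  have "\<forall>v\<in>B'. 2 \<le> f v \<longrightarrow> (\<exists>w\<in>B'. f w + 1 = f v)"
    using Suc.prems(2) x(2) by (fastforce simp: B'_def)
  moreover have "k = card B'" using Suc.hyps(2) Suc.prems(1) x(1) by (simp add: B'_def)
  ultimately have IH: "2 * sum f B' \<le> k * (k + 1)"
    using Suc.hyps(1) Suc.prems(1) by (simp add: B'_def)
  have "card {1..f x} \<le> card (f ` B)"
    using interval_subset_image_if_downward_closed[OF Suc.prems(2) x(1)] Suc.prems(1)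
    by (intro card_mono) auto
  also have "\<dots> \<le> card B" using Suc.prems(1) by (rule card_image_le)
  finally have "f x \<le> Suc k" using Suc.hyps(2) by simp
  moreover have "sum f B = f x + sum f B'"
    using Suc.prems(1) x(1) by (simp add: B'_def sum.remove)
  ultimately show ?case using IH Suc.hyps(2)[symmetric] by (simp add: algebra_simps)
qed

lemma Max_image_eq_attained:
  assumes "finite A" "a \<in> A" "f a = c" "\<And>x. x \<in> A \<Longrightarrow> f x \<le> c"
  shows "Max (f ` A) = c"
  using assms by (intro Max_eqI) (auto intro: rev_image_eqI)

lemma card_filter_add_card_filter_not:
  "finite A \<Longrightarrow> card {x\<in>A. P x} + card {x\<in>A. \<not> P x} = card A"
  by (subst card_Un_disjoint[symmetric]) (auto intro: arg_cong[where f = card])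

lemma sum_power2_le_power2_sum:
  fixes b :: "'a \<Rightarrow> nat"
  shows "finite N \<Longrightarrow> (\<Sum>u\<in>N. (b u)\<^sup>2) \<le> (\<Sum>u\<in>N. b u)\<^sup>2"
  by (induction N rule: finite_induct) (simp_all add: power2_eq_square algebra_simps)

text \<open>The extremal case is one part of size n/2 and all other parts of size 1.\<close>

lemma sum_pronic_le_square:
  fixes b :: "'a \<Rightarrow> nat"
  assumes fin: "finite N" and sum: "(\<Sum>u\<in>N. b u) = n - 1" and n: "1 \<le> n"
    and half: "\<forall>u\<in>N. 2 * b u \<le> n"
  shows "2 * (\<Sum>u\<in>N. b u * (b u + 1)) \<le> n\<^sup>2"
proof (cases "\<exists>u0\<in>N. 2 * b u0 = n")
  case False
  then have half': "\<forall>u\<in>N. 2 * b u \<le> n - 1" using half by fastforce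
  have "2 * (\<Sum>u\<in>N. b u * (b u + 1)) = (\<Sum>u\<in>N. b u * (2 * b u)) + 2 * (\<Sum>u\<in>N. b u)"
    by (simp add: sum_distrib_left sum.distrib algebra_simps)
  also have "(\<Sum>u\<in>N. b u * (2 * b u)) \<le> (\<Sum>u\<in>N. b u * (n - 1))"
    using half' by (intro sum_mono mult_le_mono2) auto
  also have "\<dots> = (n - 1) * (n - 1)" using sum by (simp add: sum_distrib_right[symmetric])
  finally show ?thesis using sum n by (cases n) (auto simp: power2_eq_square algebra_simps)
next
  case True
  then obtain u0 where u0: "u0 \<in> N" "2 * b u0 = n" by blast
  define c where "c = b u0"
  have n_eq: "n = 2 * c" using u0(2) c_def by simp
  have rest: "(\<Sum>u\<in>N - {u0}. b u) = c - 1"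
    using sum u0 fin by (simp add: sum.remove c_def)
  have "(\<Sum>u\<in>N. b u * (b u + 1))
      = c * (c + 1) + (\<Sum>u\<in>N - {u0}. (b u)\<^sup>2) + (\<Sum>u\<in>N - {u0}. b u)"
    using fin u0 by (simp add: sum.remove c_def power2_eq_square sum.distrib algebra_simps)
  also have "\<dots> \<le> c * (c + 1) + (c - 1)\<^sup>2 + (c - 1)"
    using sum_power2_le_power2_sum[of "N - {u0}" b] fin rest by simp
  also have "\<dots> = 2 * c\<^sup>2"
    using u0 n unfolding c_def[symmetric] by (cases c) (simp_all add: power2_eq_square algebra_simps)
  finally have "2 * (\<Sum>u\<in>N. b u * (b u + 1)) \<le> 2 * (2 * c\<^sup>2)" by (rule mult_le_mono2)
  also have "\<dots> = n\<^sup>2" using n_eq by (simp add: power_mult_distrib)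
  finally show ?thesis .
qed

fun path_cost :: "('a \<Rightarrow> 'a \<Rightarrow> nat) \<Rightarrow> 'a list \<Rightarrow> nat" where
  "path_cost c [] = 0"
| "path_cost c [x] = 0"
| "path_cost c (x # y # zs) = c x y + path_cost c (y # zs)"

lemma path_cost_append:
  "xs \<noteq> [] \<Longrightarrow> ys \<noteq> [] \<Longrightarrow>
    path_cost c (xs @ ys) = path_cost c xs + c (last xs) (hd ys) + path_cost c ys"
  by (induction c xs rule: path_cost.induct) (auto simp: neq_Nil_conv)

lemma path_cost_conv_sum:
  "path_cost c xs = (\<Sum>i<length xs - 1. c (xs ! i) (xs ! Suc i))"
  by (induction c xs rule: path_cost.induct) (simp_all add: sum.lessThan_Suc_shift del: sum.lessThan_Suc)

lemma path_cost_mono: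
  "(\<forall>x\<in>set xs. \<forall>y\<in>set xs. c x y \<le> c' x y) \<Longrightarrow> path_cost c xs \<le> path_cost c' xs"
  by (induction c xs rule: path_cost.induct) (auto intro: add_mono)

lemma path_cost_le_length_or_long_step:
  "path_cost c xs \<le> length xs - 1 \<or>
    (\<exists>as bs. xs = as @ bs \<and> as \<noteq> [] \<and> bs \<noteq> [] \<and> 2 \<le> c (last as) (hd bs))"
proof (induction c xs rule: path_cost.induct)
  case (3 c x y zs)
  show ?case
  proof (cases "2 \<le> c x y")
    case True
    then show ?thesis by (intro disjI2 exI[of _ "[x]"] exI[of _ "y # zs"]) simp
  next
    case short: False
    show ?thesis
    proof (cases "path_cost c (y # zs) \<le> length (y # zs) - 1")
      case True
      then show ?thesis using short by simp
    next
      case False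
      with "3.IH" obtain as bs
        where "y # zs = as @ bs" "as \<noteq> []" "bs \<noteq> []" "2 \<le> c (last as) (hd bs)"
        by blast
      then show ?thesis by (intro disjI2 exI[of _ "x # as"] exI[of _ bs]) auto
    qed
  qed
qed auto

lemma path_cost_via_centre_le:
  assumes "xs \<noteq> []" "\<forall>x\<in>set xs. \<forall>y\<in>set xs. c x y \<le> h x + h y"
  shows "path_cost c xs + h (hd xs) + h (last xs) \<le> 2 * sum_list (map h xs)"
  using assms by (induction c xs rule: path_cost.induct) fastforce+

lemma path_cost_rotate_le:
  assumes tour: "path_cost c xs + c (last xs) (hd xs) \<le> 2 * (length xs - 1)"
    and len: "3 \<le> length xs"
  shows "\<exists>k. path_cost c (rotate k xs) \<le> 2 * length xs - 4"
proof (cases "path_cost c xs \<le> length xs - 1")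
  case True
  then show ?thesis using len by (intro exI[of _ 0]) simp
next
  case False
  then obtain as bs where split: "xs = as @ bs" "as \<noteq> []" "bs \<noteq> []"
    and long: "2 \<le> c (last as) (hd bs)"
    using path_cost_le_length_or_long_step[of c xs] by blast
  have "path_cost c (rotate (length as) xs) = path_cost c bs + c (last bs) (hd as) + path_cost c as"
    using split by (simp add: rotate_append path_cost_append)
  moreover have "path_cost c xs = path_cost c as + c (last as) (hd bs) + path_cost c bs"
    using split by (simp add: path_cost_append)
  moreover have "last xs = last bs" "hd xs = hd as" using split by auto
  ultimately show ?thesis using tour long len by (intro exI[of _ "length as"]) simp
qed

lemma comm_time_image_orderings:
  "comm_time n E ` orderings n = path_cost (gdist E) ` permutations_of_set {0..<n}"
proof (intro equalityI subsetI)
  fix t assume "t \<in> comm_time n E ` orderings n"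
  then obtain \<pi> where \<pi>: "bij_betw \<pi> {0..<n} {1..n}" and t: "t = comm_time n E \<pi>"
    by (auto simp: orderings_def)
  define s where "s = inv_into {0..<n} \<pi>"
  have s: "bij_betw s {1..n} {0..<n}" unfolding s_def by (rule bij_betw_inv_into[OF \<pi>])
  define xs where "xs = map s [1..<Suc n]"
  have "xs \<in> permutations_of_set {0..<n}"
    using s by (auto simp: xs_def permutations_of_set_def distinct_map bij_betw_def
        atLeastLessThanSuc_atLeastAtMost simp del: upt_Suc)
  moreover have "t = path_cost (gdist E) xs"
    unfolding t comm_time_def path_cost_conv_sum xs_def s_def
    by (simp add: sum.atLeast1_atMost_eq nth_append del: upt_Suc)
  ultimately show "t \<in> path_cost (gdist E) ` permutations_of_set {0..<n}" by blast
next
  fix t assume "t \<in> path_cost (gdist E) ` permutations_of_set {0..<n}"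
  then obtain xs where xs: "distinct xs" "set xs = {0..<n}" and t: "t = path_cost (gdist E) xs"
    by (auto simp: permutations_of_set_def)
  have len: "length xs = n" using distinct_card[OF xs(1)] xs(2) by simp
  have nth: "bij_betw ((!) xs) {..<n} {0..<n}" using bij_betw_nth[OF xs(1)] len xs(2) by simp
  define \<pi> where "\<pi> v = Suc (inv_into {..<n} ((!) xs) v)" for v
  have "bij_betw \<pi> {0..<n} {1..n}"
    unfolding \<pi>_def using bij_betw_trans[OF bij_betw_inv_into[OF nth], of Suc "{1..n}"]
    by (simp add: comp_def image_Suc_lessThan)
  moreover have "inv_into {0..<n} \<pi> i = xs ! (i - 1)" if "i \<in> {1..n}" for i
    using that nth \<open>bij_betw \<pi> {0..<n} {1..n}\<close> len xs(2)
    by (intro inv_into_f_eq) (auto simp: \<pi>_def bij_betw_def inv_into_f_f)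
  then have "comm_time n E \<pi> = t"
    unfolding t comm_time_def path_cost_conv_sum len
    by (simp add: sum.atLeast1_atMost_eq)
  ultimately show "t \<in> comm_time n E ` orderings n" by (auto simp: orderings_def)
qed

lemma T_min_conv_path_cost:
  "T_min n E = Min (path_cost (gdist E) ` permutations_of_set {0..<n})"
  by (simp add: T_min_def comm_time_image_orderings)

lemma T_max_conv_path_cost:
  "T_max n E = Max (path_cost (gdist E) ` permutations_of_set {0..<n})"
  by (simp add: T_max_def comm_time_image_orderings)

locale connected_simple_graph =
  fixes n :: nat and E :: "nat \<Rightarrow> nat \<Rightarrow> bool"
  assumes simple: "simple_graph n E" and connected: "connected_graph n E"
begin

abbreviation d :: "nat \<Rightarrow> nat \<Rightarrow> nat" where "d \<equiv> gdist E"

lemma edge_sym: "E u v \<Longrightarrow> E v u"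
  using simple by (simp add: simple_graph_def)

lemma edge_vertices: "E u v \<Longrightarrow> u < n \<and> v < n"
  using simple by (simp add: simple_graph_def)

lemma edge_irrefl: "\<not> E u u"
  using simple by (simp add: simple_graph_def)

lemma shortest_walk:
  "u < n \<Longrightarrow> v < n \<Longrightarrow> \<exists>xs. is_walk E xs u v \<and> length xs = Suc (d u v)"
  using connected shortest_walk_exists by (fastforce simp: connected_graph_def)

lemma gdist_self: "d u u = 0"
  using gdist_less_length[OF is_walk_singleton[of E u]] by simp

lemma gdist_pos:
  assumes "u < n" "v < n" "u \<noteq> v"
  shows "1 \<le> d u v"
proof (rule ccontr)
  assume "\<not> 1 \<le> d u v"
  with shortest_walk[OF assms(1,2)] obtain xs where "is_walk E xs u v" "length xs = 1"
    by auto
  then show False using assms(3) by (cases xs) (auto simp: is_walk_def)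
qed

lemma gdist_triangle:
  assumes "u < n" "v < n" "w < n"
  shows "d u w \<le> d u v + d v w"
proof -
  obtain xs where xs: "is_walk E xs u v" "length xs = Suc (d u v)"
    using shortest_walk assms by blast
  obtain ys where ys: "is_walk E ys v w" "length ys = Suc (d v w)"
    using shortest_walk assms by blast
  show ?thesis
    using gdist_less_length[OF is_walk_append[OF xs(1) ys(1)]] xs ys by simp
qed

lemma gdist_sym:
  assumes "u < n" "v < n"
  shows "d u v = d v u"
proof -
  have "d a b \<le> d b a" if ab: "a < n" "b < n" for a b
  proof -
    obtain xs where xs: "is_walk E xs b a" "length xs = Suc (d b a)"
      using shortest_walk ab by blast
    show ?thesis
      using gdist_less_length[OF is_walk_rev[OF _ xs(1)]] xs edge_sym by auto
  qed
  then show ?thesis using assms by (simp add: antisym)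
qed

lemma gdist_edge: "E u v \<Longrightarrow> d u v = 1"
  using gdist_less_length[OF is_walk_edge[of E u v]] gdist_pos[of u v]
    edge_vertices[of u v] edge_irrefl[of u] by fastforce

lemma edge_if_gdist_1:
  assumes "u < n" "v < n" "d u v = 1"
  shows "E u v"
proof -
  obtain xs where "is_walk E xs u v" "length xs = 2"
    using shortest_walk[OF assms(1,2)] assms(3) by auto
  then show ?thesis
    by (cases xs rule: remdups_adj.cases) (auto simp: is_walk_def)
qed

lemma gdist_Suc_predecessor:
  assumes "u < n" "v < n" "d u v = Suc k"
  shows "\<exists>w<n. E w v \<and> d u w = k"
proof -
  obtain xs where xs: "is_walk E xs u v" "length xs = Suc (Suc k)"
    using shortest_walk assms by force
  define w where "w = xs ! k"
  have "E w (xs ! Suc k)" and "xs ! Suc k = v"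
    using xs by (auto simp: is_walk_def last_conv_nth w_def)
  then have e: "E w v" by simp
  then have w: "w < n" using edge_vertices by blast
  have "d u w \<le> k"
    using gdist_less_length[OF is_walk_take[OF xs(1), of "Suc k"]] xs(2) by (simp add: w_def)
  moreover have "d u v \<le> d u w + d w v" using gdist_triangle assms w by blast
  ultimately show ?thesis using gdist_edge[OF e] assms e w by (intro exI[of _ w]) auto
qed

definition dist_sum :: "nat \<Rightarrow> nat" where
  "dist_sum r = (\<Sum>v\<in>{0..<n}. d r v)"

text \<open>Moving from r to a neighbour u changes each distance by at most one, so if r is a
  median then at most half of the vertices can get closer.\<close>

lemma card_closer_le_half:
  assumes r: "r < n" and ru: "E r u" and median: "dist_sum r \<le> dist_sum u"
  shows "2 * card {v\<in>{0..<n}. d u v < d r v} \<le> n"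
proof -
  let ?closer = "\<lambda>v. d u v < d r v"
  have u: "u < n" using edge_vertices[OF ru] by simp
  have pointwise: "d u v + of_bool (?closer v) \<le> d r v + of_bool (\<not> ?closer v)"
    if v: "v < n" for v
  proof -
    have "d u v \<le> d u r + d r v" using gdist_triangle u r v by blast
    moreover have "d u r = 1" using gdist_edge[OF edge_sym[OF ru]] .
    ultimately show ?thesis by auto
  qed
  have "(\<Sum>v\<in>{0..<n}. d u v + of_bool (?closer v))
      \<le> (\<Sum>v\<in>{0..<n}. d r v + of_bool (\<not> ?closer v))"
    using pointwise by (intro sum_mono) simp
  then have "dist_sum u + card {v\<in>{0..<n}. ?closer v}
      \<le> dist_sum r + card {v\<in>{0..<n}. \<not> ?closer v}"
    by (simp add: sum.distrib dist_sum_def Int_def conj_commute)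
  moreover have "card {v\<in>{0..<n}. ?closer v} + card {v\<in>{0..<n}. \<not> ?closer v} = n"
    using card_filter_add_card_filter_not[of "{0..<n}" ?closer] by simp
  ultimately show ?thesis using median by linarith
qed

text \<open>The first step of a shortest path from r to v. Taking the least candidate makes the
  choice canonical, so that predecessors of v on shortest paths from r stay in its branch.\<close>

definition branch :: "nat \<Rightarrow> nat \<Rightarrow> nat" where
  "branch r v = (LEAST u. E r u \<and> d u v + 1 = d r v)"

definition subtree :: "nat \<Rightarrow> nat \<Rightarrow> nat set" where
  "subtree r u = {v\<in>{0..<n} - {r}. branch r v = u}"

lemma branch_spec:
  assumes r: "r < n" and v: "v < n" "v \<noteq> r"
  shows "E r (branch r v) \<and> d (branch r v) v + 1 = d r v"
proof -
  obtain k where k: "d v r = Suc k"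
    using gdist_pos[OF v(1) r v(2)] by (cases "d v r") auto
  obtain w where w: "w < n" "E w r" "d v w = k"
    using gdist_Suc_predecessor[OF v(1) r k] by blast
  have "E r w \<and> d w v + 1 = d r v"
    using w k gdist_sym[OF v(1) r] gdist_sym[OF v(1) w(1)] edge_sym by auto
  then show ?thesis unfolding branch_def by (rule LeastI)
qed

lemma branch_predecessor:
  assumes r: "r < n" and v: "v < n" "v \<noteq> r" and far: "2 \<le> d r v"
  shows "\<exists>w<n. w \<noteq> r \<and> branch r w = branch r v \<and> d r w + 1 = d r v"
proof -
  define u where "u = branch r v"
  have ru: "E r u" and uv: "d u v + 1 = d r v" using branch_spec[OF r v] by (auto simp: u_def)
  have u: "u < n" using edge_vertices[OF ru] by simp
  obtain k where k: "d u v = Suc k" using uv far by (cases "d u v") auto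
  obtain w where w: "w < n" "E w v" "d u w = k"
    using gdist_Suc_predecessor[OF u v(1) k] by blast
  have "d r w \<le> d r u + d u w" "d r v \<le> d r w + d w v"
    using gdist_triangle r u v w(1) by blast+
  then have rw: "d r w + 1 = d r v"
    using gdist_edge[OF ru] gdist_edge[OF w(2)] k uv w(3) by simp
  then have wr: "w \<noteq> r" using far gdist_self by auto
  have "branch r w \<le> u"
    unfolding branch_def using ru rw k uv w(3) by (intro Least_le) simp
  moreover have "u \<le> branch r w"
  proof -
    define u' where "u' = branch r w"
    have ru': "E r u'" and u'w: "d u' w + 1 = d r w" using branch_spec[OF r w(1) wr] by (auto simp: u'_def)
    have "d u' v \<le> d u' w + d w v" "d r v \<le> d r u' + d u' v"
      using gdist_triangle r v(1) w(1) edge_vertices[OF ru'] by blast+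
    then have "E r u' \<and> d u' v + 1 = d r v"
      using ru' u'w rw gdist_edge[OF ru'] gdist_edge[OF w(2)] by simp
    then show ?thesis unfolding u_def u'_def branch_def by (rule Least_le)
  qed
  ultimately show ?thesis using w(1) wr rw by (auto simp: u_def)
qed

lemma subtree_dist_sum_le:
  assumes r: "r < n"
  shows "2 * (\<Sum>v\<in>subtree r u. d r v) \<le> card (subtree r u) * (card (subtree r u) + 1)"
proof (rule sum_le_triangular_if_downward_closed)
  show "finite (subtree r u)" by (simp add: subtree_def)
  show "\<forall>v\<in>subtree r u. 2 \<le> d r v \<longrightarrow> (\<exists>w\<in>subtree r u. d r w + 1 = d r v)"
    using branch_predecessor[OF r] by (fastforce simp: subtree_def)
qed

lemma card_subtree_le_half:
  assumes r: "r < n" and ru: "E r u" and median: "dist_sum r \<le> dist_sum u"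
  shows "2 * card (subtree r u) \<le> n"
proof -
  have "subtree r u \<subseteq> {v\<in>{0..<n}. d u v < d r v}"
    using branch_spec[OF r] by (force simp: subtree_def)
  then have "card (subtree r u) \<le> card {v\<in>{0..<n}. d u v < d r v}" by (intro card_mono) auto
  then show ?thesis using card_closer_le_half[OF r ru median] by linarith
qed

lemma median_dist_sum_le:
  assumes r: "r < n" and median: "\<forall>u<n. dist_sum r \<le> dist_sum u"
  shows "4 * dist_sum r \<le> n\<^sup>2"
proof -
  define N where "N = {u\<in>{0..<n}. E r u}"
  have fin: "finite N" by (simp add: N_def)
  have branches: "branch r ` ({0..<n} - {r}) \<subseteq> N"
    using branch_spec[OF r] edge_vertices by (force simp: N_def)
  have "dist_sum r = (\<Sum>v\<in>{0..<n} - {r}. d r v)"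
    unfolding dist_sum_def using r gdist_self by (subst sum.remove[of _ r]) auto
  also have "\<dots> = (\<Sum>u\<in>N. \<Sum>v\<in>subtree r u. d r v)"
    unfolding subtree_def using fin branches by (intro sum.group[symmetric]) auto
  finally have "2 * dist_sum r \<le> (\<Sum>u\<in>N. card (subtree r u) * (card (subtree r u) + 1))"
    using subtree_dist_sum_le[OF r] by (simp add: sum_distrib_left sum_mono)
  moreover have "(\<Sum>u\<in>N. card (subtree r u)) = n - 1"
  proof -
    have "(\<Sum>u\<in>N. card (subtree r u)) = (\<Sum>u\<in>N. \<Sum>v\<in>subtree r u. 1)" by simp
    also have "\<dots> = card ({0..<n} - {r})"
      unfolding subtree_def using fin branches by (subst sum.group) auto
    finally show ?thesis using r by simp
  qed
  moreover have "\<forall>u\<in>N. 2 * card (subtree r u) \<le> n"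
    using card_subtree_le_half[OF r] median edge_vertices by (auto simp: N_def)
  ultimately show ?thesis
    using sum_pronic_le_square[OF fin, of "\<lambda>u. card (subtree r u)" n] r by simp
qed

lemma path_cost_lt_double_dist_sum:
  assumes r: "r < n" and xs: "xs \<in> permutations_of_set {0..<n}" and n: "2 \<le> n"
  shows "path_cost d xs < 2 * dist_sum r"
proof -
  have set: "set xs = {0..<n}" and dist: "distinct xs"
    using xs by (auto simp: permutations_of_set_def)
  have len: "length xs = n" using distinct_card[OF dist] set by simp
  then have ne: "xs \<noteq> []" using n by auto
  have "path_cost d xs + d r (hd xs) + d r (last xs) \<le> 2 * sum_list (map (d r) xs)"
  proof (rule path_cost_via_centre_le)
    show "xs \<noteq> []" by (rule ne)
    show "\<forall>x\<in>set xs. \<forall>y\<in>set xs. d x y \<le> d r x + d r y"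
    proof (intro ballI)
      fix x y assume "x \<in> set xs" "y \<in> set xs"
      then have "x < n" "y < n" using set by auto
      then show "d x y \<le> d r x + d r y" using gdist_triangle[of x r y] gdist_sym[of x r] r by simp
    qed
  qed
  also have "sum_list (map (d r) xs) = dist_sum r"
    using dist set by (simp add: sum_list_distinct_conv_sum_set dist_sum_def)
  finally have bound: "path_cost d xs + d r (hd xs) + d r (last xs) \<le> 2 * dist_sum r" .
  have "hd xs \<noteq> last xs"
    using dist len n by (cases xs rule: rev_cases) (auto simp: hd_append)
  moreover have "hd xs < n" "last xs < n"
    using set ne hd_in_set[of xs] last_in_set[of xs] by auto
  ultimately have "1 \<le> d r (hd xs) \<or> 1 \<le> d r (last xs)"
    using gdist_pos r by metis
  then show ?thesis using bound by linarith
qed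

lemma median_exists: "0 < n \<Longrightarrow> \<exists>r<n. \<forall>u<n. dist_sum r \<le> dist_sum u"
  using ex_has_least_nat[of "\<lambda>r. r < n" 0 dist_sum] by auto

lemma T_max_le:
  assumes n: "2 \<le> n"
  shows "T_max n E \<le> n\<^sup>2 div 2 - 1"
proof -
  obtain r where r: "r < n" and median: "\<forall>u<n. dist_sum r \<le> dist_sum u"
    using median_exists n by auto
  have "2 * dist_sum r \<le> n\<^sup>2 div 2"
    using median_dist_sum_le[OF r median] by linarith
  then have "path_cost d xs \<le> n\<^sup>2 div 2 - 1" if "xs \<in> permutations_of_set {0..<n}" for xs
    using path_cost_lt_double_dist_sum[OF r that n] by linarith
  then show ?thesis unfolding T_max_conv_path_cost by (intro Max.boundedI) auto
qed

lemma tour_cost_insert_after_neighbour: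
  assumes p: "p < n" and x: "E p x" and set: "set (as @ p # bs) \<subseteq> {0..<n}"
  shows "path_cost d (as @ p # x # bs) + d (last (as @ p # x # bs)) (hd (as @ p # x # bs))
    \<le> path_cost d (as @ p # bs) + d (last (as @ p # bs)) (hd (as @ p # bs)) + 2"
proof -
  have x': "x < n" and px: "d p x = 1" "d x p = 1"
    using edge_vertices[OF x] gdist_edge[OF x] gdist_edge[OF edge_sym[OF x]] by auto
  have head: "hd (as @ p # x # bs) = hd (as @ p # bs)" "hd (as @ p # bs) < n"
    using set by (cases as; auto)+
  have cost: "path_cost d (as @ p # x # ys) = path_cost d (as @ [p]) + d p x + path_cost d (x # ys)"
    for ys using path_cost_append[of "as @ [p]" "x # ys" d] by simp
  show ?thesis
  proof (cases bs)
    case Nil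
    have "d x (hd (as @ [p])) \<le> d x p + d p (hd (as @ [p]))"
      using gdist_triangle p x' head Nil by simp
    then show ?thesis using cost[of "[]"] head Nil px by simp
  next
    case (Cons b bs')
    have b: "b < n" using set Cons by auto
    have "path_cost d (as @ p # bs) = path_cost d (as @ [p]) + d p b + path_cost d bs"
      using path_cost_append[of "as @ [p]" bs d] Cons by simp
    moreover have "d x b \<le> d x p + d p b" using gdist_triangle p x' b by simp
    ultimately show ?thesis using cost[of bs] head Cons px by simp
  qed
qed

lemma farthest_vertex_exists:
  assumes fin: "finite S" and S: "S \<subseteq> {0..<n}" "r \<in> S" and card: "2 \<le> card S"
  shows "\<exists>x\<in>S. x \<noteq> r \<and> (\<forall>v\<in>S. d r v \<le> d r x)"
proof -
  have "Max (d r ` S) \<in> d r ` S" using fin S(2) by (intro Max_in) auto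
  then obtain x where x: "x \<in> S" and max: "Max (d r ` S) = d r x" by blast
  have farthest: "\<forall>v\<in>S. d r v \<le> d r x"
    unfolding max[symmetric] using fin by (auto intro: Max_ge)
  have "\<exists>v\<in>S. v \<noteq> r"
  proof (rule ccontr)
    assume "\<not> (\<exists>v\<in>S. v \<noteq> r)"
    then have "card S \<le> card {r}" by (intro card_mono) auto
    then show False using card by simp
  qed
  then obtain v where v: "v \<in> S" "v \<noteq> r" by blast
  then have "1 \<le> d r v" using S by (intro gdist_pos) auto
  then have "x \<noteq> r" using farthest v(1) gdist_self[of r] by force
  then show ?thesis using x farthest by blast
qed

text \<open>A depth-first traversal of a tree spanning S, written as a closed tour: each vertex is
  inserted right after its parent, which raises the cost of the tour by at most 2.\<close>

lemma tour_exists: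
  assumes "card S = Suc k" "S \<subseteq> {0..<n}" "r \<in> S"
    and parent: "\<forall>v\<in>S. v \<noteq> r \<longrightarrow> (\<exists>w\<in>S. E w v \<and> d r w < d r v)"
  shows "\<exists>xs. distinct xs \<and> set xs = S \<and> xs \<noteq> [] \<and>
    path_cost d xs + d (last xs) (hd xs) \<le> 2 * k"
  using assms
proof (induction k arbitrary: S)
  case 0
  then have "S = {r}" by (auto simp: card_Suc_eq)
  then show ?case by (intro exI[of _ "[r]"]) (simp add: gdist_self)
next
  case (Suc k)
  have fin: "finite S" using Suc.prems(1) card.infinite by fastforce
  obtain x where x: "x \<in> S" "x \<noteq> r" and farthest: "\<forall>v\<in>S. d r v \<le> d r x"
    using farthest_vertex_exists[of S r] fin Suc.prems(1-3) by auto
  obtain p where p: "p \<in> S" "E p x" "d r p < d r x" using Suc.prems(4) x by blast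
  let ?S' = "S - {x}"
  have "\<forall>v\<in>?S'. v \<noteq> r \<longrightarrow> (\<exists>w\<in>?S'. E w v \<and> d r w < d r v)"
    using Suc.prems(4) farthest by (metis Diff_iff leD singletonD)
  then obtain xs where xs: "distinct xs" "set xs = ?S'" "xs \<noteq> []"
    and tour: "path_cost d xs + d (last xs) (hd xs) \<le> 2 * k"
    using Suc.IH[of ?S'] Suc.prems(1-3) x fin by auto
  have "p \<in> set xs" using p xs(2) by auto
  then obtain as bs where as_bs: "xs = as @ p # bs" by (meson split_list)
  have "path_cost d (as @ p # x # bs) + d (last (as @ p # x # bs)) (hd (as @ p # x # bs))
      \<le> 2 * Suc k"
    using tour_cost_insert_after_neighbour[of p x as bs] p(1,2) tour Suc.prems(2) xs(2) as_bs
    by fastforce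
  moreover have "distinct (as @ p # x # bs)" "set (as @ p # x # bs) = S"
    using xs as_bs x p(1) by auto
  ultimately show ?case by blast
qed

lemma T_min_le:
  assumes n: "3 \<le> n"
  shows "T_min n E \<le> 2 * n - 4"
proof -
  have "\<forall>v\<in>{0..<n}. v \<noteq> 0 \<longrightarrow> (\<exists>w\<in>{0..<n}. E w v \<and> d 0 w < d 0 v)"
  proof (intro ballI impI)
    fix v assume v: "v \<in> {0..<n}" "v \<noteq> 0"
    then obtain k where k: "d 0 v = Suc k" using gdist_pos[of 0 v] by (cases "d 0 v") auto
    then show "\<exists>w\<in>{0..<n}. E w v \<and> d 0 w < d 0 v"
      using gdist_Suc_predecessor[of 0 v k] v by auto
  qed
  then obtain xs where xs: "distinct xs" "set xs = {0..<n}"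
    and tour: "path_cost d xs + d (last xs) (hd xs) \<le> 2 * (n - 1)"
    using tour_exists[of "{0..<n}" "n - 1" 0] n by auto
  have len: "length xs = n" using distinct_card[OF xs(1)] xs(2) by simp
  then obtain k where "path_cost d (rotate k xs) \<le> 2 * n - 4"
    using path_cost_rotate_le[of d xs] tour n by auto
  moreover have "rotate k xs \<in> permutations_of_set {0..<n}"
    using xs by (simp add: permutations_of_set_def)
  ultimately show ?thesis
    unfolding T_min_conv_path_cost by (meson Min_le finite_imageI finite_permutations_of_set
        imageI order_trans)
qed

end

definition star :: "nat \<Rightarrow> nat \<Rightarrow> nat \<Rightarrow> bool" where
  "star n u v \<longleftrightarrow> u < n \<and> v < n \<and> u \<noteq> v \<and> (u = 0 \<or> v = 0)"

lemma connected_simple_graph_star: "connected_simple_graph n (star n)"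
proof
  show "simple_graph n (star n)" by (auto simp: simple_graph_def star_def)
  have "is_walk (star n) [u, 0, v] u v" if "u < n" "v < n" "u \<noteq> 0" "v \<noteq> 0" for u v
    using is_walk_append[OF is_walk_edge is_walk_edge, of "star n" u 0 v] that
    by (simp add: star_def)
  then show "connected_graph n (star n)"
    unfolding connected_graph_def
    by (metis is_walk_edge is_walk_singleton star_def)
qed

text \<open>A step between two leaves of the star costs 2; only the at most two steps at the centre
  cost 1, and only one of them if the centre comes first.\<close>

lemma star_path_cost_ge:
  assumes "distinct xs" "set xs \<subseteq> {0..<n}" "xs \<noteq> []"
  shows "2 * length xs
    \<le> path_cost (gdist (star n)) xs + (if 0 \<in> set xs then if hd xs = 0 then 3 else 4 else 2)"
  using assms
proof (induction "gdist (star n)" xs rule: path_cost.induct)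
  case (3 x y zs)
  interpret connected_simple_graph n "star n" by (rule connected_simple_graph_star)
  have xy: "x < n" "y < n" "x \<noteq> y" using "3.prems" by auto
  then have "1 \<le> d x y" by (rule gdist_pos)
  moreover have "2 \<le> d x y" if "x \<noteq> 0" "y \<noteq> 0"
    using edge_if_gdist_1[OF xy(1,2)] \<open>1 \<le> d x y\<close> that by (force simp: star_def)
  ultimately show ?case using "3.hyps" "3.prems" by (auto split: if_splits)
qed auto

lemma T_min_star_ge:
  assumes "3 \<le> n"
  shows "2 * n - 4 \<le> T_min n (star n)"
proof -
  have "2 * n - 4 \<le> path_cost (gdist (star n)) xs" if "xs \<in> permutations_of_set {0..<n}" for xs
  proof -
    have "distinct xs" "set xs = {0..<n}" "length xs = n"
      using that assms by (auto simp: permutations_of_set_def distinct_card[symmetric])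
    moreover have "xs \<noteq> []" using \<open>length xs = n\<close> assms by auto
    ultimately show ?thesis using star_path_cost_ge[of xs n] by (auto split: if_splits)
  qed
  then show ?thesis unfolding T_min_conv_path_cost using assms by (intro Min.boundedI) auto
qed

definition path_graph :: "nat \<Rightarrow> nat \<Rightarrow> nat \<Rightarrow> bool" where
  "path_graph n u v \<longleftrightarrow> u < n \<and> v < n \<and> (v = Suc u \<or> u = Suc v)"

lemma is_walk_path_graph_upt:
  assumes "u \<le> v" "v < n"
  shows "is_walk (path_graph n) [u..<Suc v] u v"
  using assms by (auto simp: is_walk_def path_graph_def hd_upt last_upt nth_upt
      simp del: upt_Suc)

lemma connected_simple_graph_path_graph: "connected_simple_graph n (path_graph n)"
proof
  show "simple_graph n (path_graph n)" by (auto simp: simple_graph_def path_graph_def)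
  have sym: "\<forall>u v. path_graph n u v \<longrightarrow> path_graph n v u" by (auto simp: path_graph_def)
  have "is_walk (path_graph n) (rev [v..<Suc u]) u v" if "v \<le> u" "u < n" for u v
    by (rule is_walk_rev[OF sym is_walk_path_graph_upt[OF that]])
  then show "connected_graph n (path_graph n)"
    unfolding connected_graph_def using is_walk_path_graph_upt by (metis nat_le_linear)
qed

definition absdiff :: "nat \<Rightarrow> nat \<Rightarrow> nat" where
  "absdiff a b = (if a \<le> b then b - a else a - b)"

lemma is_walk_path_graph_absdiff:
  assumes "is_walk (path_graph n) xs u v" "i < length xs"
  shows "absdiff (xs ! 0) (xs ! i) \<le> i"
  using assms(2)
proof (induction i)
  case (Suc i)
  then have "path_graph n (xs ! i) (xs ! Suc i)" using assms(1) by (auto simp: is_walk_def)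
  then show ?case using Suc by (auto simp: path_graph_def absdiff_def split: if_splits)
qed (simp add: absdiff_def)

lemma gdist_path_graph_ge:
  assumes "u < n" "v < n"
  shows "absdiff u v \<le> gdist (path_graph n) u v"
proof -
  interpret connected_simple_graph n "path_graph n" by (rule connected_simple_graph_path_graph)
  obtain xs where xs: "is_walk (path_graph n) xs u v" "length xs = Suc (d u v)"
    using shortest_walk assms by blast
  moreover have "xs \<noteq> []" "hd xs = u" "last xs = v" using xs(1) by (auto simp: is_walk_def)
  ultimately have "xs ! 0 = u" "xs ! d u v = v" by (simp_all add: hd_conv_nth last_conv_nth)
  then show ?thesis using is_walk_path_graph_absdiff[OF xs(1), of "d u v"] xs(2) by simp
qed

definition zigzag :: "nat \<Rightarrow> nat \<Rightarrow> nat list" where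
  "zigzag c k = concat (map (\<lambda>j. [c + j, j]) [0..<k])"

lemma zigzag_Suc: "zigzag c (Suc k) = zigzag c k @ [c + k, k]"
  by (simp add: zigzag_def)

lemma set_zigzag: "set (zigzag c k) = {0..<k} \<union> {c..<c + k}"
  by (induction k) (auto simp: zigzag_Suc zigzag_def)

lemma distinct_zigzag: "k \<le> c \<Longrightarrow> 0 < c \<Longrightarrow> distinct (zigzag c k)"
  by (induction k) (auto simp: zigzag_Suc set_zigzag zigzag_def)

lemma path_cost_zigzag:
  assumes "1 \<le> k"
  shows "path_cost absdiff (zigzag c k) = k * c + (k - 1) * (c + 1)
    \<and> zigzag c k \<noteq> [] \<and> last (zigzag c k) = k - 1"
  using assms
proof (induction k)
  case (Suc k)
  show ?case
  proof (cases "k = 0")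
    case True
    then show ?thesis by (simp add: zigzag_def absdiff_def)
  next
    case False
    then have "path_cost absdiff (zigzag c (Suc k))
        = k * c + (k - 1) * (c + 1) + absdiff (k - 1) (c + k) + absdiff (c + k) k"
      using Suc path_cost_append[of "zigzag c k" "[c + k, k]" absdiff] by (simp add: zigzag_Suc)
    also have "\<dots> = Suc k * c + (Suc k - 1) * (c + 1)"
      using False by (cases k) (auto simp: absdiff_def algebra_simps)
    finally show ?thesis by (simp add: zigzag_Suc)
  qed
qed simp

lemma zigzag_permutation_exists:
  assumes "3 \<le> n"
  shows "\<exists>xs\<in>permutations_of_set {0..<n}. path_cost absdiff xs = n\<^sup>2 div 2 - 1"
proof (cases "even n")
  case True
  then obtain m where m: "n = 2 * m" by blast
  then have "path_cost absdiff (zigzag m m) = n\<^sup>2 div 2 - 1"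
    using path_cost_zigzag[of m m] assms by (cases m) (auto simp: power2_eq_square algebra_simps)
  moreover have "zigzag m m \<in> permutations_of_set {0..<n}"
    using m assms by (auto simp: permutations_of_set_def set_zigzag intro: distinct_zigzag)
  ultimately show ?thesis by blast
next
  case False
  then obtain m where m: "n = 2 * m + 1" using oddE by blast
  then have m1: "1 \<le> m" using assms by simp
  define xs where "xs = zigzag (m + 1) m @ [m]"
  have "path_cost absdiff xs = m * (m + 1) + (m - 1) * (m + 2) + 1"
    using path_cost_zigzag[OF m1, of "m + 1"] path_cost_append[of "zigzag (m + 1) m" "[m]" absdiff]
      m1 by (simp add: xs_def absdiff_def)
  also have "\<dots> = n\<^sup>2 div 2 - 1"
    using m m1 by (cases m) (auto simp: power2_eq_square algebra_simps)
  finally have "path_cost absdiff xs = n\<^sup>2 div 2 - 1" .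
  moreover have "xs \<in> permutations_of_set {0..<n}"
    using m m1 by (auto simp: permutations_of_set_def xs_def set_zigzag intro: distinct_zigzag)
  ultimately show ?thesis by blast
qed

lemma T_max_path_graph_ge:
  assumes "3 \<le> n"
  shows "n\<^sup>2 div 2 - 1 \<le> T_max n (path_graph n)"
proof -
  obtain xs where xs: "xs \<in> permutations_of_set {0..<n}" "path_cost absdiff xs = n\<^sup>2 div 2 - 1"
    using zigzag_permutation_exists[OF assms] by blast
  then have "n\<^sup>2 div 2 - 1 \<le> path_cost (gdist (path_graph n)) xs"
    using gdist_path_graph_ge path_cost_mono[of xs absdiff]
    by (fastforce simp: permutations_of_set_def)
  then show ?thesis unfolding T_max_conv_path_cost using xs(1)
    by (meson Max_ge finite_imageI finite_permutations_of_set imageI order_trans)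
qed

lemma finite_conn_graphs: "finite (conn_graphs n)"
proof (rule finite_subset)
  show "conn_graphs n \<subseteq> (\<lambda>R u v. (u, v) \<in> R) ` Pow ({0..<n} \<times> {0..<n})"
  proof
    fix E assume "E \<in> conn_graphs n"
    then have "\<And>u v. E u v \<Longrightarrow> u < n \<and> v < n" by (simp add: conn_graphs_def simple_graph_def)
    then have "E = (\<lambda>u v. (u, v) \<in> {(u, v). u < n \<and> v < n \<and> E u v})" by (auto intro!: ext)
    moreover have "{(u, v). u < n \<and> v < n \<and> E u v} \<in> Pow ({0..<n} \<times> {0..<n})" by auto
    ultimately show "E \<in> (\<lambda>R u v. (u, v) \<in> R) ` Pow ({0..<n} \<times> {0..<n})" by blast
  qed
qed simp

lemma conn_graphs_iff: "E \<in> conn_graphs n \<longleftrightarrow> connected_simple_graph n E"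
  by (simp add: conn_graphs_def connected_simple_graph_def)

theorem theorem1:
  fixes n :: nat
  assumes "n \<ge> 3"
  shows "Max (T_min n ` conn_graphs n) = 2 * n - 4
       \<and> Max (T_max n ` conn_graphs n) = n ^ 2 div 2 - 1"
proof
  have star: "star n \<in> conn_graphs n"
    by (simp add: conn_graphs_iff connected_simple_graph_star)
  have "T_min n (star n) = 2 * n - 4"
    using connected_simple_graph.T_min_le[OF connected_simple_graph_star assms]
      T_min_star_ge[OF assms] by simp
  then show "Max (T_min n ` conn_graphs n) = 2 * n - 4"
    using finite_conn_graphs star connected_simple_graph.T_min_le[OF _ assms]
    by (intro Max_image_eq_attained) (auto simp: conn_graphs_iff)
  have path: "path_graph n \<in> conn_graphs n"
    by (simp add: conn_graphs_iff connected_simple_graph_path_graph)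
  have "T_max n (path_graph n) = n\<^sup>2 div 2 - 1"
    using connected_simple_graph.T_max_le[OF connected_simple_graph_path_graph[of n]]
      T_max_path_graph_ge[OF assms] assms by simp
  then show "Max (T_max n ` conn_graphs n) = n ^ 2 div 2 - 1"
    using finite_conn_graphs path connected_simple_graph.T_max_le assms
    by (intro Max_image_eq_attained) (auto simp: conn_graphs_iff)
qed

end
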